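(* Let $\mathbf A$ be a nonzero $m\times n$ real matrix, $\mathbf B=[\mathbf b_1\ \cdots\ \mathbf b_\ell]$ an $m\times\ell$ real matrix, and $\mathbf D$ an $n\times n$ diagonal matrix with strictly positive diagonal. Let $r:=\mathrm{rank}([\mathbf A\ \mathbf B])-\mathrm{rank}(\mathbf A)$ (so $0\le r\le\ell$). Then $$v:=\min_{\mathbf c\in\mathbb R^n,\mathbf d\in\mathbb R^\ell}\Big\{(\mathbf A\mathbf c+\mathbf B\mathbf d)^\top(\mathbf A\mathbf D\mathbf A^\top)(\mathbf A\mathbf c+\mathbf B\mathbf d):\ \|\mathbf A\mathbf c+\mathbf B\mathbf d\|_2=1,\ \mathbf B^\top(\mathbf A\mathbf c+\mathbf B\mathbf d)\le\mathbf 0,\ \mathbf d\ge\mathbf 0\Big\}$$ satisfies $v\ge v_{\min}>0$, where $$v_{\min}:=\min_{\mathbf C}\big\{\lambda_{\min}^{++}(\mathbf A\mathbf D\mathbf A^\top+\mathbf C\mathbf C^\top):\ \mathbf C\text{ is an }m\times p\text{ submatrix of }\mathbf B\text{ formed by }p\text{ of its columns},\ r\le p\le\ell\big\}$$ (for $p=0$, $\mathbf C\mathbf C^\top$ is the zero matrix).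
   Context: For a nonzero symmetric positive semidefinite matrix $\mathbf S$, $\lambda_{\min}^{++}(\mathbf S)$ is its smallest strictly positive eigenvalue. Vector inequalities are componentwise. *)

theory Defs
  imports "HOL-Analysis.Analysis"
begin

text \<open>Horizontal concatenation [A B] of an m x n and an m x l matrix;
  the column index type is the disjoint sum 'n + 'l.\<close>
definition hconcat :: "real^'n^'m \<Rightarrow> real^'l^'m \<Rightarrow> real^('n + 'l)^'m" where
  "hconcat A B = (\<chi> i j. case j of Inl a \<Rightarrow> A $ i $ a | Inr b \<Rightarrow> B $ i $ b)"

definition lambda_min_pp :: "real^'m^'m \<Rightarrow> real" where
  "lambda_min_pp S = Min {t. t > 0 \<and> (\<exists>x. x \<noteq> 0 \<and> S *v x = t *\<^sub>R x)}"

text \<open>C C^T for the submatrix C of B formed by the columns indexed by J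
  (the zero matrix when J is empty).\<close>
definition subcols_gram :: "real^'l^'m \<Rightarrow> 'l set \<Rightarrow> real^'m^'m" where
  "subcols_gram B J = (\<chi> i k. \<Sum>j\<in>J. B $ i $ j * B $ k $ j)"

end

theory Submission
  imports Defs
begin

(*
  Write a_k for the columns of A, b_j for the columns of B, P = A D A^T and
  M_J = P + sum_{j in J} b_j b_j^T.  The proof has three independent parts.

  (1) Conic geometry.  If y = A c + B d with d >= 0 and b_j . y <= 0 for all j,
      a Caratheodory argument modulo span{a_k} selects a set K of columns,
      linearly independent modulo span{a_k}, still representing y modulo that
      span with nonnegative weights; K is then enlarged to J such that the
      b_J span all columns of B modulo span{a_k}.  Independence lets us
      interpolate: some x in V_J = span({a_k} u b_J) has a_k . x = a_k . y and
      b_j . x = 0 on J, and the obtuse angle condition forces |x| >= |y|.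
  (2) Spectral theory.  On a subspace V invariant under a symmetric matrix M
      on which M is positive definite, a minimiser of the Rayleigh quotient is
      an eigenvector, so  lambda_min_pp M * |x|^2 <= x . M x  for x in V.
  (3) Matrix bookkeeping: M_J acts as sum D_kk (a_k . x) a_k + sum_J (b_j . x) b_j,
      is positive definite on V_J, and rank [A B] - rank A <= |J|.
  Then y . P y = x . M_J x >= lambda_min_pp M_J |x|^2 >= lambda_min_pp M_J >= v_min.
*)

section \<open>Independence of a family modulo a set\<close>

definition indep_mod :: "'a::real_vector set \<Rightarrow> ('l \<Rightarrow> 'a) \<Rightarrow> 'l set \<Rightarrow> bool" where
  "indep_mod S b J \<longleftrightarrow> (\<forall>j\<in>J. b j \<notin> span (S \<union> b ` (J - {j})))"

lemma indep_mod_subset: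
  assumes "indep_mod S b J" "J' \<subseteq> J"
  shows "indep_mod S b J'"
  unfolding indep_mod_def
proof
  fix i assume i: "i \<in> J'"
  have "span (S \<union> b ` (J' - {i})) \<subseteq> span (S \<union> b ` (J - {i}))"
    using assms(2) by (intro span_mono) auto
  then show "b i \<notin> span (S \<union> b ` (J' - {i}))"
    using assms(1,2) i unfolding indep_mod_def by auto
qed

lemma indep_mod_insert:
  assumes indep: "indep_mod S b E" and new: "b k \<notin> span (S \<union> b ` E)"
  shows "indep_mod S b (insert k E)"
  unfolding indep_mod_def
proof
  fix j assume j: "j \<in> insert k E"
  have kE: "k \<notin> E" using new by (auto intro: span_base)
  show "b j \<notin> span (S \<union> b ` (insert k E - {j}))"
  proof (cases "j = k")
    case True
    then show ?thesis using new kE by simp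
  next
    case False
    then have jE: "j \<in> E" using j by auto
    have old: "b j \<notin> span (S \<union> b ` (E - {j}))" using indep jE unfolding indep_mod_def by auto
    have split: "S \<union> b ` (insert k E - {j}) = insert (b k) (S \<union> b ` (E - {j}))"
      using False by auto
    have merged: "insert (b j) (S \<union> b ` (E - {j})) = S \<union> b ` E" using jE by auto
    show ?thesis
      using in_span_insert[of "b j" "b k" "S \<union> b ` (E - {j})"] old new split merged by auto
  qed
qed

lemma indep_mod_maximal:
  fixes b :: "'l::finite \<Rightarrow> 'a::real_vector"
  shows "\<exists>E. indep_mod S b E \<and> (\<forall>k. b k \<in> span (S \<union> b ` E))"
proof -
  have "indep_mod S b {}" by (simp add: indep_mod_def)
  moreover have "\<forall>E. indep_mod S b E \<longrightarrow> card E < CARD('l) + 1"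
    by (simp add: card_mono less_Suc_eq_le)
  ultimately obtain E where E: "indep_mod S b E"
    and largest: "\<And>E'. indep_mod S b E' \<Longrightarrow> card E' \<le> card E"
    using Lattices_Big.ex_has_greatest_nat[of "indep_mod S b" "{}" card] by blast
  have "b k \<in> span (S \<union> b ` E)" for k
  proof (rule ccontr)
    assume new: "b k \<notin> span (S \<union> b ` E)"
    then have "k \<notin> E" by (auto intro: span_base)
    then have "card (insert k E) = card E + 1" by simp
    with largest[OF indep_mod_insert[OF E new]] show False by simp
  qed
  with E show ?thesis by blast
qed

lemma span_Un_image_coeffs:
  fixes b :: "'l \<Rightarrow> 'a::real_vector"
  assumes "finite K" "y \<in> span (S \<union> b ` K)"
  shows "\<exists>\<mu>. y - (\<Sum>i\<in>K. \<mu> i *\<^sub>R b i) \<in> span S"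
  using assms
proof (induction K arbitrary: y rule: finite_induct)
  case empty
  then show ?case by simp
next
  case (insert i K)
  have "span (S \<union> b ` insert i K) = span (insert (b i) (S \<union> b ` K))" by simp
  with insert.prems obtain k where "y - k *\<^sub>R b i \<in> span (S \<union> b ` K)"
    using span_breakdown_eq by blast
  from insert.IH[OF this] obtain \<mu> where \<mu>: "y - k *\<^sub>R b i - (\<Sum>i\<in>K. \<mu> i *\<^sub>R b i) \<in> span S"
    by blast
  have "(\<Sum>l\<in>K. (\<mu>(i := k)) l *\<^sub>R b l) = (\<Sum>l\<in>K. \<mu> l *\<^sub>R b l)"
    using insert.hyps(2) by (intro sum.cong) auto
  then have "y - (\<Sum>l\<in>insert i K. (\<mu>(i := k)) l *\<^sub>R b l) = y - k *\<^sub>R b i - (\<Sum>i\<in>K. \<mu> i *\<^sub>R b i)"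
    using insert.hyps by (simp add: algebra_simps)
  with \<mu> show ?case by metis
qed

lemma not_indep_mod_relation:
  fixes b :: "'l \<Rightarrow> 'a::real_vector"
  assumes "finite K" "\<not> indep_mod S b K"
  shows "\<exists>c. (\<exists>j\<in>K. c j > 0) \<and> (\<Sum>i\<in>K. c i *\<^sub>R b i) \<in> span S"
proof -
  obtain j where jK: "j \<in> K" and dep: "b j \<in> span (S \<union> b ` (K - {j}))"
    using assms(2) unfolding indep_mod_def by blast
  obtain \<mu> where \<mu>: "b j - (\<Sum>i\<in>K - {j}. \<mu> i *\<^sub>R b i) \<in> span S"
    using span_Un_image_coeffs[OF _ dep] assms(1) by blast
  define c where "c i = (if i = j then 1 else - \<mu> i)" for i
  have "(\<Sum>i\<in>K. c i *\<^sub>R b i) = c j *\<^sub>R b j + (\<Sum>i\<in>K - {j}. c i *\<^sub>R b i)"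
    using jK assms(1) by (simp add: sum.remove)
  also have "\<dots> = b j - (\<Sum>i\<in>K - {j}. \<mu> i *\<^sub>R b i)"
    by (simp add: c_def sum_negf[symmetric])
  finally show ?thesis using \<mu> jK by (intro exI[of _ c]) (auto simp: c_def)
qed

text \<open>The ratio test of the simplex method: moving along a direction c with a
  positive entry, nonnegative weights e stay nonnegative until one vanishes.\<close>
lemma ratio_test:
  fixes e c :: "'l \<Rightarrow> real"
  assumes "finite K" "\<forall>i\<in>K. e i \<ge> 0" "j \<in> K" "c j > 0"
  shows "\<exists>t\<ge>0. \<exists>i0\<in>K. e i0 = t * c i0 \<and> (\<forall>i\<in>K. t * c i \<le> e i)"
proof -
  define Pos where "Pos = {i\<in>K. c i > 0}"
  have Pos: "finite Pos" "Pos \<noteq> {}" using assms by (auto simp: Pos_def)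
  define t where "t = Min ((\<lambda>i. e i / c i) ` Pos)"
  have "t \<in> (\<lambda>i. e i / c i) ` Pos" unfolding t_def using Pos by (intro Min_in) auto
  then obtain i0 where i0: "i0 \<in> Pos" "t = e i0 / c i0" by auto
  have "t * c i \<le> e i" if "i \<in> K" for i
  proof (cases "c i > 0")
    case True
    then have "t \<le> e i / c i" using Pos that unfolding t_def Pos_def by auto
    with True show ?thesis by (simp add: pos_le_divide_eq)
  next
    case False
    have "t \<ge> 0" using i0 assms(2) by (auto simp: Pos_def)
    with False have "t * c i \<le> 0" by (simp add: mult_nonneg_nonpos)
    with assms(2) that show ?thesis by force
  qed
  moreover have "t \<ge> 0" "e i0 = t * c i0" using i0 assms(2) by (auto simp: Pos_def)
  ultimately show ?thesis using i0(1) unfolding Pos_def by blast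
qed

lemma conic_caratheodory_mod:
  fixes b :: "'l::finite \<Rightarrow> 'a::real_vector"
  assumes "\<forall>j. d j \<ge> (0::real)" "y - (\<Sum>j\<in>UNIV. d j *\<^sub>R b j) \<in> span S"
  shows "\<exists>K e. (\<forall>j\<in>K. e j \<ge> 0) \<and> y - (\<Sum>j\<in>K. e j *\<^sub>R b j) \<in> span S \<and> indep_mod S b K"
proof -
  define P where "P K \<longleftrightarrow> (\<exists>e. (\<forall>j\<in>K. e j \<ge> 0) \<and> y - (\<Sum>j\<in>K. e j *\<^sub>R b j) \<in> span S)" for K
  have "P UNIV" using assms unfolding P_def by blast
  then obtain K where PK: "P K" and smallest: "\<And>K'. P K' \<Longrightarrow> card K \<le> card K'"
    using ex_has_least_nat[of P UNIV card] by blast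
  from PK obtain e where e: "\<forall>j\<in>K. e j \<ge> 0" "y - (\<Sum>j\<in>K. e j *\<^sub>R b j) \<in> span S"
    unfolding P_def by blast
  have "indep_mod S b K"
  proof (rule ccontr)
    assume "\<not> indep_mod S b K"
    then obtain c j where j: "j \<in> K" "c j > 0" and rel: "(\<Sum>i\<in>K. c i *\<^sub>R b i) \<in> span S"
      using not_indep_mod_relation[of K S b] by auto
    obtain t i0 where i0: "i0 \<in> K" "e i0 = t * c i0" and ok: "\<forall>i\<in>K. t * c i \<le> e i"
      using ratio_test[of K e j c] e(1) j by auto
    define e' where "e' i = e i - t * c i" for i
    have "y - (\<Sum>i\<in>K - {i0}. e' i *\<^sub>R b i) = y - (\<Sum>i\<in>K. e' i *\<^sub>R b i)"
      using i0 by (simp add: sum.remove e'_def)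
    also have "\<dots> = (y - (\<Sum>j\<in>K. e j *\<^sub>R b j)) + t *\<^sub>R (\<Sum>i\<in>K. c i *\<^sub>R b i)"
      by (simp add: e'_def scaleR_diff_left sum_subtractf scaleR_sum_right algebra_simps)
    finally have "P (K - {i0})"
      unfolding P_def using ok e(2) rel by (metis DiffD1 diff_ge_0_iff_ge e'_def span_add span_scale)
    with smallest have "card K \<le> card (K - {i0})" by blast
    moreover have "card (K - {i0}) < card K" using i0 by (intro card_Diff1_less) auto
    ultimately show False by simp
  qed
  with e show ?thesis by blast
qed

section \<open>Interpolation and the norm bound\<close>

lemma indep_mod_interpolate:
  fixes b :: "'l \<Rightarrow> 'a::euclidean_space"
  assumes "finite J" "indep_mod S b J"
  shows "\<exists>x \<in> span (S \<union> b ` J). (\<forall>v\<in>S. v \<bullet> x = v \<bullet> y) \<and> (\<forall>j\<in>J. b j \<bullet> x = 0)"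
  using assms
proof (induction J rule: finite_induct)
  case empty
  obtain p n where "p \<in> span S" "\<And>w. w \<in> span S \<Longrightarrow> orthogonal n w" "y = p + n"
    using orthogonal_subspace_decomp_exists by metis
  then show ?case
    by (intro bexI[of _ p]) (auto simp: orthogonal_def inner_add_right inner_commute span_base)
next
  case (insert j J)
  from insert.IH[OF indep_mod_subset[OF insert.prems]]
  obtain x where x: "x \<in> span (S \<union> b ` J)" "\<forall>v\<in>S. v \<bullet> x = v \<bullet> y" "\<forall>i\<in>J. b i \<bullet> x = 0"
    by blast
  have bj: "b j \<notin> span (S \<union> b ` J)"
    using insert.prems insert.hyps(2) unfolding indep_mod_def by auto
  obtain p n where p: "p \<in> span (S \<union> b ` J)" and n: "\<And>w. w \<in> span (S \<union> b ` J) \<Longrightarrow> orthogonal n w"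
    and b_split: "b j = p + n"
    using orthogonal_subspace_decomp_exists by metis
  have orth: "w \<bullet> n = 0" if "w \<in> span (S \<union> b ` J)" for w
    using n[OF that] by (simp add: orthogonal_def inner_commute)
  have "n \<noteq> 0" using bj b_split p by auto
  then have nn: "n \<bullet> n \<noteq> 0" by simp
  have bjn: "b j \<bullet> n = n \<bullet> n" using b_split orth[OF p] by (simp add: inner_add_left)
  define x' where "x' = x - ((b j \<bullet> x) / (n \<bullet> n)) *\<^sub>R n"
  have sub: "span (S \<union> b ` J) \<subseteq> span (S \<union> b ` insert j J)" by (intro span_mono) auto
  have "b j \<in> span (S \<union> b ` insert j J)" by (intro span_base) auto
  then have "n \<in> span (S \<union> b ` insert j J)"
    using b_split p sub by (metis add_diff_cancel_left' span_diff subsetD)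
  then have "x' \<in> span (S \<union> b ` insert j J)"
    unfolding x'_def using x(1) sub by (intro span_diff span_scale) auto
  moreover have "v \<bullet> x' = v \<bullet> y" if "v \<in> S" for v
  proof -
    have "v \<bullet> n = 0" using that by (intro orth span_base) auto
    then show ?thesis using x(2) that unfolding x'_def by (simp add: inner_diff_right)
  qed
  moreover have "b j \<bullet> x' = 0"
    using nn bjn unfolding x'_def by (simp add: inner_diff_right)
  moreover have "\<forall>i\<in>J. b i \<bullet> x' = 0"
    using x(3) orth unfolding x'_def by (simp add: inner_diff_right span_base)
  ultimately show ?case by (intro bexI[of _ x']) auto
qed

lemma obtuse_norm_bound:
  fixes b :: "'l \<Rightarrow> 'a::euclidean_space"
  assumes rep: "y - (\<Sum>j\<in>K. e j *\<^sub>R b j) \<in> span S" and e: "\<forall>j\<in>K. e j \<ge> 0"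
    and obtuse: "\<forall>j\<in>K. b j \<bullet> y \<le> 0"
    and x_S: "\<forall>v\<in>S. v \<bullet> x = v \<bullet> y" and x_K: "\<forall>j\<in>K. b j \<bullet> x = 0"
  shows "norm y \<le> norm x"
proof -
  define n where "n = x - y"
  have "orthogonal n (y - (\<Sum>j\<in>K. e j *\<^sub>R b j))"
    using x_S by (intro orthogonal_to_span[OF rep]) (simp add: orthogonal_def n_def inner_diff_right inner_commute)
  then have "y \<bullet> n = (\<Sum>j\<in>K. e j *\<^sub>R b j) \<bullet> n"
    by (simp add: orthogonal_def inner_diff_right inner_commute)
  also have "\<dots> = - (\<Sum>j\<in>K. e j * (b j \<bullet> y))"
    using x_K by (simp add: inner_sum_left n_def inner_diff_right sum_negf)
  finally have "y \<bullet> n = - (\<Sum>j\<in>K. e j * (b j \<bullet> y))" .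
  moreover have "(\<Sum>j\<in>K. e j * (b j \<bullet> y)) \<le> 0"
    using e obtuse by (intro sum_nonpos) (simp add: mult_nonneg_nonpos)
  moreover have "(y + n) \<bullet> (y + n) = y \<bullet> y + 2 * (y \<bullet> n) + n \<bullet> n"
    by (simp add: inner_add_left inner_add_right inner_commute)
  moreover have "0 \<le> n \<bullet> n" by simp
  ultimately have "y \<bullet> y \<le> (y + n) \<bullet> (y + n)" by linarith
  then show ?thesis by (simp add: n_def norm_le)
qed

lemma conic_witness:
  fixes b :: "'l::finite \<Rightarrow> 'a::euclidean_space"
  assumes "y - (\<Sum>j\<in>UNIV. d j *\<^sub>R b j) \<in> span S" "\<forall>j. d j \<ge> 0" "\<forall>j. b j \<bullet> y \<le> 0"
  shows "\<exists>J x. x \<in> span (S \<union> b ` J) \<and> (\<forall>v\<in>S. v \<bullet> x = v \<bullet> y) \<and> (\<forall>j\<in>J. b j \<bullet> x = 0)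
           \<and> norm y \<le> norm x \<and> (\<forall>k. b k \<in> span (S \<union> b ` J))"
proof -
  obtain K e where e: "\<forall>j\<in>K. e j \<ge> 0" and rep: "y - (\<Sum>j\<in>K. e j *\<^sub>R b j) \<in> span S"
    and K: "indep_mod S b K"
    using conic_caratheodory_mod[OF assms(2,1)] by blast
  obtain x1 where x1: "x1 \<in> span (S \<union> b ` K)" "\<forall>v\<in>S. v \<bullet> x1 = v \<bullet> y" "\<forall>j\<in>K. b j \<bullet> x1 = 0"
    using indep_mod_interpolate[OF finite_class.finite K] by blast
  obtain E where E: "indep_mod (S \<union> b ` K) b E" "\<forall>k. b k \<in> span (S \<union> b ` K \<union> b ` E)"
    using indep_mod_maximal by blast
  obtain x where x: "x \<in> span (S \<union> b ` K \<union> b ` E)" "\<forall>v\<in>S \<union> b ` K. v \<bullet> x = v \<bullet> x1"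
    "\<forall>j\<in>E. b j \<bullet> x = 0"
    using indep_mod_interpolate[OF finite_class.finite E(1)] by blast
  have J: "S \<union> b ` K \<union> b ` E = S \<union> b ` (K \<union> E)" by auto
  have "\<forall>v\<in>S. v \<bullet> x = v \<bullet> y" "\<forall>j\<in>K. b j \<bullet> x = 0" "\<forall>j\<in>K \<union> E. b j \<bullet> x = 0"
    using x(2,3) x1(2,3) by auto
  moreover from this(1,2) have "norm y \<le> norm x"
    using obtuse_norm_bound[OF rep e] assms(3) by blast
  ultimately show ?thesis using x(1) E(2) unfolding J by blast
qed

section \<open>Rayleigh quotients and the smallest positive eigenvalue\<close>

lemma quad_nonneg_zero:
  fixes a b :: real
  assumes "\<And>s. 0 \<le> 2 * s * a + s^2 * b"
  shows "a = 0"
proof (rule ccontr)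
  assume a: "a \<noteq> 0"
  define e where "e = 1 / (\<bar>b\<bar> + 1)"
  have e0: "e > 0" unfolding e_def by (simp add: add_pos_nonneg)
  have "e * b \<le> e * \<bar>b\<bar>" using e0 by (simp add: mult_left_mono)
  also have "\<dots> < 1" unfolding e_def by (simp add: divide_less_eq)
  finally have eb: "e * b - 2 < 0" by simp
  have "0 \<le> 2 * (- e * a) * a + (- e * a)^2 * b" by (rule assms)
  also have "\<dots> = (e * a^2) * (e * b - 2)" by (simp add: power2_eq_square algebra_simps)
  also have "\<dots> < 0" using e0 a eb by (simp add: mult_pos_neg)
  finally show False by simp
qed

lemma rayleigh_minimizer_exists:
  fixes M :: "real^'m^'m"
  assumes V: "subspace V" and x: "x \<in> V" "x \<noteq> 0"
  shows "\<exists>z\<in>V. norm z = 1 \<and> (\<forall>w\<in>V. (z \<bullet> (M *v z)) * (norm w)^2 \<le> w \<bullet> (M *v w))"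
proof -
  define f where "f z = z \<bullet> (M *v z)" for z
  have fscale: "f (c *\<^sub>R w) = c^2 * f w" for c w
    by (simp add: f_def matrix_vector_mult_scaleR power2_eq_square)
  define S where "S = V \<inter> sphere 0 1"
  have "compact S"
    unfolding S_def using closed_subspace[OF V] by (metis Int_commute compact_Int_closed compact_sphere)
  moreover have "continuous_on S f" unfolding f_def
    by (intro continuous_intros linear_continuous_on matrix_vector_mul_bounded_linear)
  moreover have "x /\<^sub>R norm x \<in> S" using x V unfolding S_def by (simp add: subspace_scale)
  ultimately obtain z where zS: "z \<in> S" and zmin: "\<And>w. w \<in> S \<Longrightarrow> f z \<le> f w"
    using continuous_attains_inf[of S f] by blast
  have "f z * (norm w)^2 \<le> f w" if "w \<in> V" for w
  proof (cases "w = 0")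
    case True then show ?thesis by (simp add: f_def)
  next
    case False
    have "w /\<^sub>R norm w \<in> S" using that False V unfolding S_def by (simp add: subspace_scale)
    from zmin[OF this] have "f z \<le> f w / (norm w)^2" by (simp add: fscale divide_inverse power_inverse mult.commute)
    with False show ?thesis by (simp add: pos_le_divide_eq)
  qed
  with zS show ?thesis unfolding S_def f_def by auto
qed

text \<open>A minimiser of the Rayleigh quotient on an invariant subspace of a
  symmetric matrix is an eigenvector (first-order optimality).\<close>
lemma rayleigh_minimizer_eigenvector:
  fixes M :: "real^'m^'m"
  assumes sym: "\<And>x y. (M *v x) \<bullet> y = x \<bullet> (M *v y)"
    and V: "subspace V" and inv: "\<And>x. x \<in> V \<Longrightarrow> M *v x \<in> V"
    and z: "z \<in> V" "norm z = 1"
    and zmin: "\<forall>w\<in>V. (z \<bullet> (M *v z)) * (norm w)^2 \<le> w \<bullet> (M *v w)"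
  shows "M *v z = (z \<bullet> (M *v z)) *\<^sub>R z"
proof -
  define t where "t = z \<bullet> (M *v z)"
  define r where "r = M *v z - t *\<^sub>R z"
  have zz: "z \<bullet> z = 1" using z(2) by (simp add: norm_eq_1)
  have orth: "h \<bullet> r = 0" if h: "h \<in> V" for h
  proof (rule quad_nonneg_zero)
    fix s :: real
    have "z + s *\<^sub>R h \<in> V" using z h V by (simp add: subspace_add subspace_scale)
    with zmin have "t * (norm (z + s *\<^sub>R h))^2 \<le> (z + s *\<^sub>R h) \<bullet> (M *v (z + s *\<^sub>R h))"
      unfolding t_def by blast
    moreover have "z \<bullet> (M *v h) = h \<bullet> (M *v z)" using sym[of z h] by (simp add: inner_commute)
    ultimately show "0 \<le> 2 * s * (h \<bullet> r) + s^2 * (h \<bullet> (M *v h) - t * (h \<bullet> h))"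
      using zz unfolding r_def t_def power2_norm_eq_inner
      by (simp add: matrix_vector_right_distrib matrix_vector_mult_scaleR inner_add_left
          inner_add_right inner_diff_right inner_commute power2_eq_square algebra_simps)
  qed
  have "r \<in> V" unfolding r_def using inv[OF z(1)] z(1) V by (simp add: subspace_diff subspace_scale)
  then have "r = 0" using orth[of r] by simp
  then show ?thesis unfolding r_def t_def by simp
qed

text \<open>A symmetric matrix has finitely many eigenvalues (eigenvectors for distinct
  eigenvalues are orthogonal, hence independent).\<close>
lemma eigenvalues_finite:
  fixes M :: "real^'m^'m"
  assumes sym: "\<And>x y. (M *v x) \<bullet> y = x \<bullet> (M *v y)"
  shows "finite {t. \<exists>x. x \<noteq> 0 \<and> M *v x = t *\<^sub>R x}"
proof -
  define T where "T = {t. \<exists>x. x \<noteq> 0 \<and> M *v x = t *\<^sub>R x}"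
  define g where "g t = (SOME x. x \<noteq> 0 \<and> M *v x = t *\<^sub>R x)" for t
  have g: "g t \<noteq> 0 \<and> M *v g t = t *\<^sub>R g t" if "t \<in> T" for t
    using that unfolding T_def g_def by (metis (mono_tags, lifting) mem_Collect_eq someI_ex)
  have inj: "inj_on g T"
  proof (rule inj_onI)
    fix s t assume "s \<in> T" "t \<in> T" "g s = g t"
    then have "s *\<^sub>R g s = t *\<^sub>R g s" "g s \<noteq> 0" using g by metis+
    then show "s = t" by simp
  qed
  have "pairwise orthogonal (g ` T)"
    unfolding pairwise_def
  proof clarify
    fix s t assume s: "s \<in> T" and t: "t \<in> T" and ne: "g s \<noteq> g t"
    have "s * (g s \<bullet> g t) = (M *v g s) \<bullet> g t" using g[OF s] by simp
    also have "\<dots> = g s \<bullet> (M *v g t)" by (rule sym)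
    also have "\<dots> = t * (g s \<bullet> g t)" using g[OF t] by simp
    finally have "(s - t) * (g s \<bullet> g t) = 0" by (simp add: algebra_simps)
    moreover have "s \<noteq> t" using ne by auto
    ultimately show "orthogonal (g s) (g t)" by (simp add: orthogonal_def)
  qed
  moreover have "0 \<notin> g ` T" using g by auto
  ultimately have "independent (g ` T)" using pairwise_orthogonal_independent by blast
  then have "finite (g ` T)" using independent_bound by blast
  then show ?thesis using inj finite_image_iff unfolding T_def by blast
qed

lemma lambda_min_pp_rayleigh:
  fixes M :: "real^'m^'m"
  assumes sym: "\<And>x y. (M *v x) \<bullet> y = x \<bullet> (M *v y)"
    and V: "subspace V" and inv: "\<And>x. x \<in> V \<Longrightarrow> M *v x \<in> V"
    and pd: "\<And>x. x \<in> V \<Longrightarrow> x \<noteq> 0 \<Longrightarrow> x \<bullet> (M *v x) > 0"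
    and x: "x \<in> V" "x \<noteq> 0"
  shows "0 < lambda_min_pp M \<and> lambda_min_pp M * (norm x)^2 \<le> x \<bullet> (M *v x)"
proof -
  obtain z where z: "z \<in> V" "norm z = 1"
    and zmin: "\<forall>w\<in>V. (z \<bullet> (M *v z)) * (norm w)^2 \<le> w \<bullet> (M *v w)"
    using rayleigh_minimizer_exists[OF V x] by blast
  define t where "t = z \<bullet> (M *v z)"
  have t: "t > 0" using pd z unfolding t_def by fastforce
  have eig: "M *v z = t *\<^sub>R z"
    unfolding t_def by (rule rayleigh_minimizer_eigenvector[OF sym V inv z zmin])
  define Pos where "Pos = {t. t > 0 \<and> (\<exists>x. x \<noteq> 0 \<and> M *v x = t *\<^sub>R x)}"
  have fin: "finite Pos" unfolding Pos_def
    by (rule finite_subset[OF _ eigenvalues_finite[OF sym]]) auto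
  have "z \<noteq> 0" using z(2) by auto
  then have "t \<in> Pos" unfolding Pos_def using t eig by blast
  then have le: "lambda_min_pp M \<le> t" and "lambda_min_pp M \<in> Pos"
    using Min_le[OF fin] Min_in[OF fin] unfolding lambda_min_pp_def Pos_def by auto
  then have "lambda_min_pp M > 0" unfolding Pos_def by simp
  moreover have "lambda_min_pp M * (norm x)^2 \<le> t * (norm x)^2"
    using le by (simp add: mult_right_mono)
  ultimately show ?thesis using zmin x(1) unfolding t_def by fastforce
qed

section \<open>The matrices A D A^T + C C^T in terms of columns\<close>

lemma transpose_mult_component:
  fixes B :: "real^'l^'m"
  shows "(transpose B *v y) $ j = column j B \<bullet> y"
  by (simp add: matrix_vector_mult_def transpose_def inner_vec_def column_def mult.commute)

lemma matrix_vector_mult_in_span_columns: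
  fixes A :: "real^'n^'m"
  shows "A *v c = (\<Sum>i\<in>UNIV. c $ i *\<^sub>R column i A)" "A *v c \<in> span (columns A)"
proof -
  show eq: "A *v c = (\<Sum>i\<in>UNIV. c $ i *\<^sub>R column i A)"
    by (simp add: matrix_mult_sum scalar_mult_eq_scaleR)
  show "A *v c \<in> span (columns A)"
    unfolding eq columns_def by (intro span_sum span_scale span_base) auto
qed

lemma diag_gram_apply:
  fixes A :: "real^'n^'m" and D :: "real^'n^'n"
  assumes D_diag: "\<forall>i j. i \<noteq> j \<longrightarrow> D $ i $ j = 0"
  shows "(A ** D ** transpose A) *v x = (\<Sum>k\<in>UNIV. (D$k$k * (column k A \<bullet> x)) *\<^sub>R column k A)"
proof -
  have AD: "(A ** D) $ i $ k = A $ i $ k * D $ k $ k" for i k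
  proof -
    have "(A ** D) $ i $ k = (\<Sum>k'\<in>UNIV. A $ i $ k' * D $ k' $ k)"
      by (simp add: matrix_matrix_mult_def)
    also have "\<dots> = (\<Sum>k'\<in>UNIV. if k' = k then A $ i $ k * D $ k $ k else 0)"
      using D_diag by (intro sum.cong) auto
    finally show ?thesis by simp
  qed
  show ?thesis
  proof (subst vec_eq_iff, rule allI)
    fix i
    have "((A ** D ** transpose A) *v x) $ i = (\<Sum>l\<in>UNIV. \<Sum>k\<in>UNIV. A$i$k * D$k$k * A$l$k * x$l)"
      by (simp add: matrix_vector_mult_def matrix_matrix_mult_def[of "A ** D"] AD transpose_def
          sum_distrib_right)
    also have "\<dots> = (\<Sum>k\<in>UNIV. D$k$k * (\<Sum>l\<in>UNIV. A$l$k * x$l) * A$i$k)"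
      by (subst sum.swap) (simp add: sum_distrib_left sum_distrib_right mult_ac)
    finally show "((A ** D ** transpose A) *v x) $ i
        = (\<Sum>k\<in>UNIV. (D$k$k * (column k A \<bullet> x)) *\<^sub>R column k A) $ i"
      by (simp add: inner_vec_def column_def)
  qed
qed

lemma subcols_gram_apply:
  fixes B :: "real^'l^'m"
  shows "subcols_gram B J *v x = (\<Sum>j\<in>J. (column j B \<bullet> x) *\<^sub>R column j B)"
proof (subst vec_eq_iff, rule allI)
  fix i
  have "(subcols_gram B J *v x) $ i = (\<Sum>l\<in>UNIV. \<Sum>j\<in>J. B$i$j * B$l$j * x$l)"
    by (simp add: matrix_vector_mult_def subcols_gram_def sum_distrib_right)
  also have "\<dots> = (\<Sum>j\<in>J. (\<Sum>l\<in>UNIV. B$l$j * x$l) * B$i$j)"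
    by (subst sum.swap) (simp add: sum_distrib_left sum_distrib_right mult_ac)
  finally show "(subcols_gram B J *v x) $ i = (\<Sum>j\<in>J. (column j B \<bullet> x) *\<^sub>R column j B) $ i"
    by (simp add: inner_vec_def column_def)
qed

lemma gram_apply:
  fixes A :: "real^'n^'m" and B :: "real^'l^'m" and D :: "real^'n^'n"
  assumes "\<forall>i j. i \<noteq> j \<longrightarrow> D $ i $ j = 0"
  shows "(A ** D ** transpose A + subcols_gram B J) *v x
    = (\<Sum>k\<in>UNIV. (D$k$k * (column k A \<bullet> x)) *\<^sub>R column k A) + (\<Sum>j\<in>J. (column j B \<bullet> x) *\<^sub>R column j B)"
  by (simp add: matrix_vector_mult_add_rdistrib diag_gram_apply[OF assms] subcols_gram_apply)

lemma gram_quadratic_form: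
  fixes A :: "real^'n^'m" and B :: "real^'l^'m" and D :: "real^'n^'n"
  assumes "\<forall>i j. i \<noteq> j \<longrightarrow> D $ i $ j = 0"
  shows "x \<bullet> ((A ** D ** transpose A + subcols_gram B J) *v x)
    = (\<Sum>k\<in>UNIV. D$k$k * (column k A \<bullet> x)^2) + (\<Sum>j\<in>J. (column j B \<bullet> x)^2)"
  by (simp add: gram_apply[OF assms] inner_add_right inner_sum_right power2_eq_square mult_ac inner_commute)

lemma lambda_min_pp_gram:
  fixes A :: "real^'n^'m" and B :: "real^'l^'m" and D :: "real^'n^'n"
  assumes D_diag: "\<forall>i j. i \<noteq> j \<longrightarrow> D $ i $ j = 0" and D_pos: "\<forall>i. D $ i $ i > 0"
    and x: "x \<in> span (columns A \<union> (\<lambda>j. column j B) ` J)" "x \<noteq> 0"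
  defines "M \<equiv> A ** D ** transpose A + subcols_gram B J"
  shows "0 < lambda_min_pp M \<and> lambda_min_pp M * (norm x)^2 \<le> x \<bullet> (M *v x)"
proof (rule lambda_min_pp_rayleigh)
  let ?V = "span (columns A \<union> (\<lambda>j. column j B) ` J)"
  show "(M *v u) \<bullet> w = u \<bullet> (M *v w)" for u w
    unfolding M_def gram_apply[OF D_diag]
    by (simp add: inner_add_right inner_add_left inner_sum_right inner_sum_left mult_ac inner_commute)
  show "M *v u \<in> ?V" for u
    unfolding M_def gram_apply[OF D_diag]
    by (intro span_add span_sum span_scale span_base) (auto simp: columns_def)
  show "u \<bullet> (M *v u) > 0" if u: "u \<in> ?V" "u \<noteq> 0" for u
  proof (rule ccontr)
    assume "\<not> u \<bullet> (M *v u) > 0"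
    then have "(\<Sum>k\<in>UNIV. D$k$k * (column k A \<bullet> u)^2) + (\<Sum>j\<in>J. (column j B \<bullet> u)^2) \<le> 0"
      unfolding M_def gram_quadratic_form[OF D_diag] by simp
    moreover have "0 \<le> (\<Sum>k\<in>UNIV. D$k$k * (column k A \<bullet> u)^2)"
      using D_pos by (intro sum_nonneg) (simp add: less_imp_le)
    moreover have "0 \<le> (\<Sum>j\<in>J. (column j B \<bullet> u)^2)" by (intro sum_nonneg) simp
    ultimately have "(\<Sum>k\<in>UNIV. D$k$k * (column k A \<bullet> u)^2) = 0" "(\<Sum>j\<in>J. (column j B \<bullet> u)^2) = 0"
      by linarith+
    then have "D$k$k * (column k A \<bullet> u)^2 = 0" "j \<in> J \<Longrightarrow> (column j B \<bullet> u)^2 = 0" for k j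
      using D_pos by (simp_all add: sum_nonneg_eq_0_iff less_imp_le)
    then have "column k A \<bullet> u = 0" "j \<in> J \<Longrightarrow> column j B \<bullet> u = 0" for k j
      using D_pos by simp_all (metis less_irrefl)
    then have "\<forall>v\<in>columns A \<union> (\<lambda>j. column j B) ` J. orthogonal u v"
      by (auto simp: columns_def orthogonal_def inner_commute)
    then have "orthogonal u u" by (intro orthogonal_to_span[OF u(1)]) blast
    then show False using u(2) by (simp add: orthogonal_def)
  qed
qed (use x in simp_all)

section \<open>The rank condition\<close>

lemma columns_hconcat:
  fixes A :: "real^'n^'m" and B :: "real^'l^'m"
  shows "columns (hconcat A B) = columns A \<union> columns B"
proof -
  have Inl: "column (Inl a) (hconcat A B) = column a A" and Inr: "column (Inr b) (hconcat A B) = column b B"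
    for a b by (simp_all add: column_def hconcat_def)
  show ?thesis
  proof (intro set_eqI iffI)
    fix v assume "v \<in> columns (hconcat A B)"
    then obtain i where "v = column i (hconcat A B)" by (auto simp: columns_def)
    then show "v \<in> columns A \<union> columns B" by (cases i) (auto simp: Inl Inr columns_def)
  next
    fix v assume "v \<in> columns A \<union> columns B"
    then show "v \<in> columns (hconcat A B)" by (auto simp: columns_def simp flip: Inl Inr)
  qed
qed

lemma dim_Un_finite_le:
  fixes S :: "'a::euclidean_space set"
  assumes "finite T"
  shows "dim (S \<union> T) \<le> dim S + card T"
  using assms
proof (induction T rule: finite_induct)
  case (insert t T)
  have "dim (S \<union> insert t T) \<le> dim (S \<union> T) + 1"
    using dim_insert[of t "S \<union> T"] by simp
  with insert show ?case by simp
qed simp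

lemma rank_hconcat_le:
  fixes A :: "real^'n^'m" and B :: "real^'l^'m"
  assumes "\<forall>k. column k B \<in> span (columns A \<union> (\<lambda>j. column j B) ` J)"
  shows "rank (hconcat A B) \<le> rank A + card J"
proof -
  have "rank (hconcat A B) = dim (columns A \<union> columns B)"
    by (simp add: column_rank_def columns_hconcat)
  also have "\<dots> \<le> dim (span (columns A \<union> (\<lambda>j. column j B) ` J))"
    using assms by (intro dim_subset) (auto intro: span_base simp: columns_def)
  also have "\<dots> \<le> dim (columns A) + card ((\<lambda>j. column j B) ` J)"
    by (simp add: dim_Un_finite_le)
  also have "\<dots> \<le> rank A + card J"
    by (simp add: column_rank_def card_image_le)
  finally show ?thesis .
qed

lemma feasible_value_bound:
  fixes A :: "real^'n^'m" and B :: "real^'l^'m" and D :: "real^'n^'n"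
  assumes D_diag: "\<forall>i j. i \<noteq> j \<longrightarrow> D $ i $ j = 0" and D_pos: "\<forall>i. D $ i $ i > 0"
    and y: "y = A *v c + B *v d" "norm y = 1" "\<forall>j. (transpose B *v y) $ j \<le> 0" "\<forall>j. d $ j \<ge> 0"
  shows "\<exists>J. rank (hconcat A B) - rank A \<le> card J
    \<and> lambda_min_pp (A ** D ** transpose A + subcols_gram B J) \<le> y \<bullet> ((A ** D ** transpose A) *v y)"
proof -
  let ?b = "\<lambda>j. column j B"
  have "y - (\<Sum>j\<in>UNIV. d $ j *\<^sub>R ?b j) \<in> span (columns A)"
    using y(1) matrix_vector_mult_in_span_columns[of A c] matrix_vector_mult_in_span_columns(1)[of B d]
    by simp
  then obtain J x where x: "x \<in> span (columns A \<union> ?b ` J)" "\<forall>v\<in>columns A. v \<bullet> x = v \<bullet> y"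
      "\<forall>j\<in>J. ?b j \<bullet> x = 0" "norm y \<le> norm x" and spans: "\<forall>k. ?b k \<in> span (columns A \<union> ?b ` J)"
    using conic_witness[of y "\<lambda>j. d $ j" ?b] y(3,4) unfolding transpose_mult_component by blast
  define M where "M = A ** D ** transpose A + subcols_gram B J"
  have empty_gram: "subcols_gram B {} = 0" by (simp add: subcols_gram_def vec_eq_iff)
  have "1 \<le> norm x" using x(4) y(2) by simp
  then have "x \<noteq> 0" and norm_x: "1 \<le> (norm x)^2" by (auto simp: one_le_power)
  with lambda_min_pp_gram[OF D_diag D_pos x(1)]
  have "0 < lambda_min_pp M" "lambda_min_pp M * (norm x)^2 \<le> x \<bullet> (M *v x)"
    unfolding M_def by auto
  moreover have "lambda_min_pp M * 1 \<le> lambda_min_pp M * (norm x)^2"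
    using norm_x \<open>0 < lambda_min_pp M\<close> by (intro mult_left_mono) auto
  ultimately have "lambda_min_pp M \<le> x \<bullet> (M *v x)" by linarith
  also have "\<dots> = y \<bullet> ((A ** D ** transpose A + subcols_gram B {}) *v y)"
  proof -
    have "column k A \<bullet> x = column k A \<bullet> y" for k using x(2) by (auto simp: columns_def)
    then show ?thesis unfolding M_def gram_quadratic_form[OF D_diag] using x(3) by simp
  qed
  also have "\<dots> = y \<bullet> ((A ** D ** transpose A) *v y)"
    using empty_gram by simp
  finally have "lambda_min_pp M \<le> y \<bullet> ((A ** D ** transpose A) *v y)" .
  moreover have "rank (hconcat A B) - rank A \<le> card J"
    using rank_hconcat_le[OF spans] by simp
  ultimately show ?thesis unfolding M_def by blast
qed

theorem mainTheorem15:
  fixes A :: "real^'n^'m" and B :: "real^'l^'m" and D :: "real^'n^'n"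
  assumes A_nz: "A \<noteq> 0"
    and D_diag: "\<forall>i j. i \<noteq> j \<longrightarrow> D $ i $ j = 0"
    and D_pos: "\<forall>i. D $ i $ i > 0"
  defines "vmin \<equiv> Min {lambda_min_pp (A ** D ** transpose A + subcols_gram B J) | J.
                          rank (hconcat A B) - rank A \<le> card J}"
  shows "vmin > 0 \<and>
    (\<forall>(c::real^'n) (d::real^'l).
       let y = A *v c + B *v d in
       norm y = 1 \<and> (\<forall>j. (transpose B *v y) $ j \<le> 0) \<and> (\<forall>j. d $ j \<ge> 0)
       \<longrightarrow> y \<bullet> ((A ** D ** transpose A) *v y) \<ge> vmin)"
proof -
  let ?lam = "\<lambda>J. lambda_min_pp (A ** D ** transpose A + subcols_gram B J)"
  let ?adm = "{J :: 'l set. rank (hconcat A B) - rank A \<le> card J}"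
  have vmin: "vmin = Min (?lam ` ?adm)" unfolding vmin_def by (simp add: setcompr_eq_image)
  have fin: "finite (?lam ` ?adm)" by simp
  obtain k where "column k A \<noteq> 0"
    using A_nz by (auto simp: column_def vec_eq_iff)
  moreover have "column k A \<in> span (columns A \<union> (\<lambda>j. column j B) ` J)" for J
    by (intro span_base) (auto simp: columns_def)
  ultimately have pos: "?lam J > 0" for J using lambda_min_pp_gram[OF D_diag D_pos] by blast
  have "\<forall>k. column k B \<in> span (columns A \<union> (\<lambda>j. column j B) ` UNIV)" by (auto intro: span_base)
  then have "rank (hconcat A B) \<le> rank A + card (UNIV :: 'l set)" by (rule rank_hconcat_le)
  then have "UNIV \<in> ?adm" by (simp add: le_diff_conv add.commute)
  then have "vmin > 0" unfolding vmin using Min_in[OF fin] pos by fastforce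
  moreover have "vmin \<le> y \<bullet> ((A ** D ** transpose A) *v y)"
    if feasible: "y = A *v c + B *v d" "norm y = 1" "\<forall>j. (transpose B *v y) $ j \<le> 0" "\<forall>j. d $ j \<ge> 0" for c d y
  proof -
    obtain J where "J \<in> ?adm" and J: "?lam J \<le> y \<bullet> ((A ** D ** transpose A) *v y)"
      using feasible_value_bound[OF D_diag D_pos feasible] by blast
    then have "vmin \<le> ?lam J" unfolding vmin using fin by (intro Min_le) auto
    with J show ?thesis by linarith
  qed
  ultimately show ?thesis unfolding Let_def by blast
qed

end
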